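(* Let $X$ be a compactum and $Z$ a paracompact space such that every compact subspace of $Z$ has finite Lebesgue covering dimension. Let $g\colon Y\to Z$ be a surjective map with the following property: for every $z\in Z$ and every neighborhood $U(z)$ of $z$ in $Z$ there is a neighborhood $V(z)\subset U(z)$ of $z$ such that $g^{-1}(V(z))\in AE(X)$. Then for every open cover $\omega$ of $Z$ and every map $f\colon X\to Z$ there exists a map $\tilde f\colon X\to Y$ such that $f$ and $g\circ\tilde f$ are $\omega$-close (i.e. for every $x\in X$ there is $W\in\omega$ containing both $f(x)$ and $g(\tilde f(x))$).
   Context: All spaces are Tychonoff and all maps continuous; a compactum is a compact Hausdorff space. For spaces $X,Y$, $Y\in AE(X)$ means every map $h\colon A\to Y$ defined on a closed subspace $A\subset X$ extends to a map $X\to Y$. *)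

theory Defs
  imports "HOL-Analysis.Analysis"
begin

definition tychonoff_space :: "'a topology \<Rightarrow> bool" where
  "tychonoff_space X \<longleftrightarrow> completely_regular_space X \<and> Hausdorff_space X"

definition paracompact_space :: "'a topology \<Rightarrow> bool" where
  "paracompact_space X \<longleftrightarrow> Hausdorff_space X \<and>
     (\<forall>\<U>. (\<forall>U\<in>\<U>. openin X U) \<and> \<Union>\<U> = topspace X \<longrightarrow>
        (\<exists>\<V>. (\<forall>V\<in>\<V>. openin X V) \<and> \<Union>\<V> = topspace X \<and>
             (\<forall>V\<in>\<V>. \<exists>U\<in>\<U>. V \<subseteq> U) \<and> locally_finite_in X \<V>))"

definition covering_dim_le :: "'a topology \<Rightarrow> nat \<Rightarrow> bool" where
  "covering_dim_le X n \<longleftrightarrow>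
     (\<forall>\<U>. finite \<U> \<and> (\<forall>U\<in>\<U>. openin X U) \<and> \<Union>\<U> = topspace X \<longrightarrow>
        (\<exists>\<V>. finite \<V> \<and> (\<forall>V\<in>\<V>. openin X V) \<and> \<Union>\<V> = topspace X \<and>
             (\<forall>V\<in>\<V>. \<exists>U\<in>\<U>. V \<subseteq> U) \<and>
             (\<forall>x\<in>topspace X. card {V\<in>\<V>. x \<in> V} \<le> Suc n)))"

definition finite_covering_dim :: "'a topology \<Rightarrow> bool" where
  "finite_covering_dim X \<longleftrightarrow> (\<exists>n. covering_dim_le X n)"

definition AE_for :: "'b topology \<Rightarrow> 'a topology \<Rightarrow> bool" where
  "AE_for Y X \<longleftrightarrow>
     (\<forall>A h. closedin X A \<and> continuous_map (subtopology X A) Y h \<longrightarrow>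
        (\<exists>k. continuous_map X Y k \<and> (\<forall>x\<in>A. k x = h x)))"

end

theory Submission
  imports Defs
begin

(* The image K = f(X) is compact, so by hypothesis it has covering dimension at most some n. Using a
   continuous pseudometric d on Z (from complete regularity) one builds n+1 levels of open
   neighbourhoods G r a of the points a of K, each with g-preimage in AE(X) and inside a member of
   the cover, such that G r a contains the d-ball of radius e around a and every lower level
   neighbourhood G r' a' with d a a' < e. Next, K has a finite cover of order at most n+1 by sets of
   d-diameter less than e; pulling it back along f and cutting the values of a family of peak
   functions at a common gap, X is covered by finitely many closed sets sorted into n+1 levels,
   with the sets of one level pairwise disjoint. The lift is then built level by level: on a set of
   the next level the partial lift already takes values in the g-preimage of the corresponding
   G-neighbourhood, so it extends over X by the AE property, and the extensions of one level are
   pasted together. *)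

definition continuous_pseudometric :: "'a topology \<Rightarrow> ('a \<Rightarrow> 'a \<Rightarrow> real) \<Rightarrow> bool" where
  "continuous_pseudometric X d \<longleftrightarrow>
     (\<forall>a. d a a = 0) \<and> (\<forall>a b. d a b = d b a) \<and> (\<forall>a b c. d a c \<le> d a b + d b c) \<and>
     (\<forall>a. continuous_map X euclideanreal (d a))"

definition pball :: "'a topology \<Rightarrow> ('a \<Rightarrow> 'a \<Rightarrow> real) \<Rightarrow> 'a \<Rightarrow> real \<Rightarrow> 'a set" where
  "pball X d a r = {z \<in> topspace X. d a z < r}"

lemma continuous_pseudometric_sym: "continuous_pseudometric X d \<Longrightarrow> d a b = d b a"
  unfolding continuous_pseudometric_def by blast

lemma continuous_pseudometric_triangle: "continuous_pseudometric X d \<Longrightarrow> d a c \<le> d a b + d b c"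
  unfolding continuous_pseudometric_def by blast

lemma centre_in_pball:
  "\<lbrakk>continuous_pseudometric X d; a \<in> topspace X; 0 < r\<rbrakk> \<Longrightarrow> a \<in> pball X d a r"
  unfolding continuous_pseudometric_def pball_def by auto

lemma openin_pball: "continuous_pseudometric X d \<Longrightarrow> openin X (pball X d a r)"
  unfolding continuous_pseudometric_def pball_def
  using openin_continuous_map_preimage[of X euclideanreal "d a" "{..<r}"] by auto

lemma continuous_pseudometric_max:
  assumes "continuous_pseudometric X d" "continuous_pseudometric X d'"
  shows "continuous_pseudometric X (\<lambda>a b. max (d a b) (d' a b))"
  using assms unfolding continuous_pseudometric_def
proof (intro conjI allI; elim conjE)
  show "max (d a c) (d' a c) \<le> max (d a b) (d' a b) + max (d b c) (d' b c)"
    if "\<forall>a b c. d a c \<le> d a b + d b c" "\<forall>a b c. d' a c \<le> d' a b + d' b c" for a b c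
    using that(1)[rule_format, where a=a and b=b and c=c] that(2)[rule_format, where a=a and b=b and c=c]
    by linarith
qed (auto simp: continuous_map_real_max)

lemma compactin_Urysohn_subcover:
  fixes X :: "'a topology"
  assumes cr: "completely_regular_space X" and K: "compactin X K"
    and U: "\<And>i. i \<in> I \<Longrightarrow> openin X (U i)" and cov: "K \<subseteq> (\<Union>i\<in>I. U i)"
  obtains C :: "'a set" and \<iota> \<phi> where "finite C" "\<And>c. c \<in> C \<Longrightarrow> \<iota> c \<in> I"
    "\<And>c. c \<in> C \<Longrightarrow> continuous_map X euclideanreal (\<phi> c)"
    "\<And>c x. \<lbrakk>c \<in> C; x \<in> topspace X - U (\<iota> c)\<rbrakk> \<Longrightarrow> \<phi> c x = 1"
    "\<And>x. x \<in> K \<Longrightarrow> \<exists>c\<in>C. \<phi> c x < 1/2"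
proof -
  have "\<exists>i \<phi>. i \<in> I \<and> continuous_map X euclideanreal \<phi> \<and> \<phi> z = 0 \<and> \<phi> ` (topspace X - U i) \<subseteq> {1}"
    if z: "z \<in> K" for z
  proof -
    obtain i where i: "i \<in> I" "z \<in> U i" using cov z by blast
    then obtain \<phi> where "continuous_map X euclideanreal \<phi>" "\<phi> z = 0" "\<phi> ` (topspace X - U i) \<subseteq> {1}"
      using cr[unfolded completely_regular_space_alt', rule_format, OF U[OF i(1)] i(2)] by blast
    then show ?thesis using i(1) by blast
  qed
  then obtain \<iota> \<phi> where sep: "\<And>z. z \<in> K \<Longrightarrow> \<iota> z \<in> I \<and> continuous_map X euclideanreal (\<phi> z) \<and>
      \<phi> z z = 0 \<and> \<phi> z ` (topspace X - U (\<iota> z)) \<subseteq> {1}"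
    by metis
  define N where "N z = {x \<in> topspace X. \<phi> z x < 1/2}" for z
  have "\<exists>\<F>. finite \<F> \<and> \<F> \<subseteq> N ` K \<and> K \<subseteq> \<Union>\<F>"
  proof (rule compactinD[OF K])
    show "openin X V" if V: "V \<in> N ` K" for V
    proof -
      obtain z where z: "z \<in> K" "V = N z" using V by blast
      then show ?thesis unfolding N_def
        using openin_continuous_map_preimage[of X euclideanreal "\<phi> z" "{..<1/2}"] sep[OF z(1)] by auto
    qed
    show "K \<subseteq> \<Union> (N ` K)"
    proof
      fix z assume z: "z \<in> K"
      then have "z \<in> N z" using sep[OF z] K compactin_subset_topspace unfolding N_def by auto
      then show "z \<in> \<Union> (N ` K)" using z by blast
    qed
  qed
  then obtain \<F> where \<F>: "finite \<F>" "\<F> \<subseteq> N ` K" "K \<subseteq> \<Union>\<F>"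
    by blast
  obtain C where C: "C \<subseteq> K" "finite C" "\<F> = N ` C"
    using finite_subset_image[OF \<F>(1,2)] by blast
  show thesis
  proof (rule that[of C \<iota> \<phi>])
    show "finite C" by (rule C(2))
    show "\<iota> c \<in> I" "continuous_map X euclideanreal (\<phi> c)" if "c \<in> C" for c
      using sep C(1) that by blast+
    show "\<phi> c x = 1" if "c \<in> C" "x \<in> topspace X - U (\<iota> c)" for c x
      using sep[of c] C(1) that by auto
    show "\<exists>c\<in>C. \<phi> c x < 1/2" if "x \<in> K" for x
      using \<F>(3) C(3) that unfolding N_def by blast
  qed
qed

lemma compactin_pseudometric_Lebesgue_number:
  fixes X :: "'a topology"
  assumes cr: "completely_regular_space X" and K: "compactin X K"
    and \<G>: "\<And>G. G \<in> \<G> \<Longrightarrow> openin X G" "K \<subseteq> \<Union>\<G>"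
  obtains d e where "continuous_pseudometric X d" "0 < e" "\<And>a. a \<in> K \<Longrightarrow> \<exists>G\<in>\<G>. pball X d a e \<subseteq> G"
proof -
  obtain C :: "'a set" and \<iota> \<phi> where C: "finite C" "\<And>c. c \<in> C \<Longrightarrow> \<iota> c \<in> \<G>"
    "\<And>c. c \<in> C \<Longrightarrow> continuous_map X euclideanreal (\<phi> c)"
    "\<And>c x. \<lbrakk>c \<in> C; x \<in> topspace X - \<iota> c\<rbrakk> \<Longrightarrow> \<phi> c x = 1"
    "\<And>x. x \<in> K \<Longrightarrow> \<exists>c\<in>C. \<phi> c x < 1/2"
    by (rule compactin_Urysohn_subcover[OF cr K, of \<G> "\<lambda>G. G"]) (use \<G> in auto)
  define d where "d x y = (\<Sum>c\<in>C. \<bar>\<phi> c x - \<phi> c y\<bar>)" for x y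
  have d: "continuous_pseudometric X d"
    unfolding continuous_pseudometric_def
  proof (intro conjI allI)
    show "d a c \<le> d a b + d b c" for a b c
      unfolding d_def by (simp add: sum.distrib[symmetric] sum_mono abs_triangle_ineq[THEN order_trans])
    show "continuous_map X euclideanreal (d a)" for a
      unfolding d_def using C(1,3) by (intro continuous_intros) auto
  qed (simp_all add: d_def abs_minus_commute)
  have "\<exists>G\<in>\<G>. pball X d a (1/2) \<subseteq> G" if a: "a \<in> K" for a
  proof -
    obtain c where c: "c \<in> C" "\<phi> c a < 1/2" using C(5) a by blast
    have "z \<in> \<iota> c" if z: "z \<in> pball X d a (1/2)" for z
    proof -
      have "\<bar>\<phi> c a - \<phi> c z\<bar> \<le> d a z"
        unfolding d_def using C(1) c(1) by (intro member_le_sum) auto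
      then have "\<phi> c z \<noteq> 1" using z c(2) unfolding pball_def by auto
      then show ?thesis using C(4)[OF c(1)] z unfolding pball_def by blast
    qed
    then show ?thesis using C(2) c(1) by blast
  qed
  then show thesis using that[OF d, of "1/2"] by simp
qed

(* The last clause is what lets a lift built on lower levels be extended into a higher level
   neighbourhood. *)
definition nested_nbhds ::
    "'a topology \<Rightarrow> 'a set \<Rightarrow> 'a set set \<Rightarrow> ('a set \<Rightarrow> bool) \<Rightarrow> ('a \<Rightarrow> 'a \<Rightarrow> real) \<Rightarrow> real \<Rightarrow>
     (nat \<Rightarrow> 'a \<Rightarrow> 'a set) \<Rightarrow> nat \<Rightarrow> bool" where
  "nested_nbhds Z K \<omega> P d e G L \<longleftrightarrow> continuous_pseudometric Z d \<and> 0 < e \<and>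
     (\<forall>r<L. \<forall>a\<in>K. P (G r a) \<and> openin Z (G r a) \<and> (\<exists>W\<in>\<omega>. G r a \<subseteq> W) \<and> pball Z d a e \<subseteq> G r a) \<and>
     (\<forall>r r' a a'. r' < r \<and> r < L \<and> a \<in> K \<and> a' \<in> K \<and> d a a' < e \<longrightarrow> G r' a' \<subseteq> G r a)"

lemma exists_small_good_nbhds:
  assumes cr: "completely_regular_space Z" and K: "compactin Z K"
    and good: "\<And>z U. \<lbrakk>z \<in> K; openin Z U; z \<in> U\<rbrakk> \<Longrightarrow> \<exists>V. P V \<and> openin Z V \<and> z \<in> V \<and> V \<subseteq> U"
    and \<omega>: "\<And>W. W \<in> \<omega> \<Longrightarrow> openin Z W" "K \<subseteq> \<Union>\<omega>"
    and d: "continuous_pseudometric Z d" and e: "0 < e"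
  obtains d0 e0 G0 where "continuous_pseudometric Z d0" "0 < e0"
    "\<And>a. a \<in> K \<Longrightarrow> P (G0 a) \<and> openin Z (G0 a) \<and> (\<exists>W\<in>\<omega>. G0 a \<subseteq> W) \<and>
       pball Z d0 a e0 \<subseteq> G0 a \<and> G0 a \<subseteq> pball Z d a e"
proof -
  define \<G> where "\<G> = {V. P V \<and> openin Z V \<and> (\<exists>W\<in>\<omega>. V \<subseteq> W) \<and> (\<exists>c. V \<subseteq> pball Z d c (e/2))}"
  have \<G>_open: "openin Z G" if "G \<in> \<G>" for G
    using that by (simp add: \<G>_def)
  have \<G>_cov: "K \<subseteq> \<Union>\<G>"
  proof
    fix z assume z: "z \<in> K"
    then obtain W where W: "W \<in> \<omega>" "z \<in> W" using \<omega>(2) by blast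
    have "z \<in> topspace Z" using z K compactin_subset_topspace by blast
    then have "z \<in> W \<inter> pball Z d z (e/2)" using centre_in_pball[OF d] e W(2) by simp
    moreover have "openin Z (W \<inter> pball Z d z (e/2))" using \<omega>(1)[OF W(1)] openin_pball[OF d] by blast
    ultimately obtain V where "P V" "openin Z V" "z \<in> V" "V \<subseteq> W \<inter> pball Z d z (e/2)"
      using good[OF z] by blast
    then have "V \<in> \<G>" using W(1) unfolding \<G>_def by blast
    then show "z \<in> \<Union>\<G>" using \<open>z \<in> V\<close> by blast
  qed
  obtain d0 e0 where d0: "continuous_pseudometric Z d0" "0 < e0"
    and Leb: "\<And>a. a \<in> K \<Longrightarrow> \<exists>G\<in>\<G>. pball Z d0 a e0 \<subseteq> G"
    using compactin_pseudometric_Lebesgue_number[OF cr K \<G>_open \<G>_cov] by blast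
  obtain G0 where G0: "\<And>a. a \<in> K \<Longrightarrow> G0 a \<in> \<G> \<and> pball Z d0 a e0 \<subseteq> G0 a"
    using Leb by metis
  have "P (G0 a) \<and> openin Z (G0 a) \<and> (\<exists>W\<in>\<omega>. G0 a \<subseteq> W) \<and> pball Z d0 a e0 \<subseteq> G0 a \<and>
      G0 a \<subseteq> pball Z d a e" if a: "a \<in> K" for a
  proof (intro conjI)
    show "P (G0 a)" "openin Z (G0 a)" "\<exists>W\<in>\<omega>. G0 a \<subseteq> W" "pball Z d0 a e0 \<subseteq> G0 a"
      using G0[OF a] by (simp_all add: \<G>_def)
    obtain c where c: "G0 a \<subseteq> pball Z d c (e/2)" using G0[OF a] by (auto simp: \<G>_def)
    have "a \<in> topspace Z" using a K compactin_subset_topspace by blast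
    then have "a \<in> G0 a" using G0[OF a] centre_in_pball[OF d0(1) _ d0(2)] by blast
    show "G0 a \<subseteq> pball Z d a e"
    proof
      fix z assume z: "z \<in> G0 a"
      have "d c a < e/2" "d c z < e/2" "z \<in> topspace Z"
        using c z \<open>a \<in> G0 a\<close> unfolding pball_def by auto
      then show "z \<in> pball Z d a e"
        using continuous_pseudometric_triangle[OF d, where a=a and b=c and c=z]
          continuous_pseudometric_sym[OF d, of a c]
        unfolding pball_def by auto
    qed
  qed
  then show thesis using that[OF d0] by blast
qed

lemma nested_nbhds_Suc:
  assumes N: "nested_nbhds Z K \<omega> P d e G L"
    and d0: "continuous_pseudometric Z d0" "0 < e0"
    and G0: "\<And>a. a \<in> K \<Longrightarrow> P (G0 a) \<and> openin Z (G0 a) \<and> (\<exists>W\<in>\<omega>. G0 a \<subseteq> W) \<and>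
       pball Z d0 a e0 \<subseteq> G0 a \<and> G0 a \<subseteq> pball Z d a (e/2)"
  shows "nested_nbhds Z K \<omega> P (\<lambda>a b. max (d a b) (d0 a b)) (min (e/2) e0)
           (\<lambda>r a. if r = 0 then G0 a else G (r - 1) a) (Suc L)"
proof -
  let ?d = "\<lambda>a b. max (d a b) (d0 a b)" and ?e = "min (e/2) e0"
  let ?G = "\<lambda>r a. if r = 0 then G0 a else G (r - 1) a"
  have d: "continuous_pseudometric Z d" and e: "0 < e"
    and levels: "\<And>r a. \<lbrakk>r < L; a \<in> K\<rbrakk> \<Longrightarrow>
       P (G r a) \<and> openin Z (G r a) \<and> (\<exists>W\<in>\<omega>. G r a \<subseteq> W) \<and> pball Z d a e \<subseteq> G r a"
    and nested: "\<And>r r' a a'. \<lbrakk>r' < r; r < L; a \<in> K; a' \<in> K; d a a' < e\<rbrakk> \<Longrightarrow> G r' a' \<subseteq> G r a"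
    using N unfolding nested_nbhds_def by blast+
  have small_ball: "pball Z ?d a ?e \<subseteq> pball Z d0 a e0" "pball Z ?d a ?e \<subseteq> pball Z d a e" for a
    using e unfolding pball_def by auto
  have close: "d a b < e/2" if "?d a b < ?e" for a b
    using that by (simp add: max_def split: if_splits)
  have "P (?G r a) \<and> openin Z (?G r a) \<and> (\<exists>W\<in>\<omega>. ?G r a \<subseteq> W) \<and> pball Z ?d a ?e \<subseteq> ?G r a"
    if r: "r < Suc L" and a: "a \<in> K" for r a
  proof (cases "r = 0")
    case True
    then show ?thesis using G0[OF a] small_ball(1)[of a] by auto
  next
    case False
    then have "r - 1 < L" using r by simp
    then have "P (G (r - 1) a) \<and> openin Z (G (r - 1) a) \<and> (\<exists>W\<in>\<omega>. G (r - 1) a \<subseteq> W) \<and>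
        pball Z d a e \<subseteq> G (r - 1) a"
      using levels a by blast
    then show ?thesis using False small_ball(2)[of a] by auto
  qed
  moreover have "?G r' a' \<subseteq> ?G r a"
    if rr': "r' < r" "r < Suc L" and aa': "a \<in> K" "a' \<in> K" "?d a a' < ?e" for r r' a a'
  proof (cases "r' = 0")
    case True
    have "G0 a' \<subseteq> pball Z d a e"
    proof
      fix z assume "z \<in> G0 a'"
      then have "z \<in> topspace Z" "d a' z < e/2" using G0[OF aa'(2)] unfolding pball_def by auto
      moreover have "d a a' < e/2" using close[OF aa'(3)] .
      ultimately show "z \<in> pball Z d a e"
        using continuous_pseudometric_triangle[OF d, where a=a and b=a' and c=z] unfolding pball_def by auto
    qed
    also have "\<dots> \<subseteq> G (r - 1) a" using levels[of "r - 1" a] rr' aa' by simp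
    finally show ?thesis using True rr' by simp
  next
    case False
    have "r' - 1 < r - 1" "r - 1 < L" "d a a' < e" using False rr' close[OF aa'(3)] e by auto
    then have "G (r' - 1) a' \<subseteq> G (r - 1) a" using nested aa'(1,2) by blast
    then show ?thesis using False rr' by simp
  qed
  ultimately show ?thesis
    unfolding nested_nbhds_def using continuous_pseudometric_max[OF d d0(1)] d0(2) e by auto
qed

lemma exists_nested_nbhds:
  assumes cr: "completely_regular_space Z" and K: "compactin Z K"
    and good: "\<And>z U. \<lbrakk>z \<in> K; openin Z U; z \<in> U\<rbrakk> \<Longrightarrow> \<exists>V. P V \<and> openin Z V \<and> z \<in> V \<and> V \<subseteq> U"
    and \<omega>: "\<And>W. W \<in> \<omega> \<Longrightarrow> openin Z W" "K \<subseteq> \<Union>\<omega>"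
  shows "\<exists>d e G. nested_nbhds Z K \<omega> P d e G L"
proof (induction L)
  case 0
  have "continuous_pseudometric Z (\<lambda>a b. 0)"
    unfolding continuous_pseudometric_def by simp
  then show ?case unfolding nested_nbhds_def by (intro exI[of _ "\<lambda>a b. 0"] exI[of _ 1]) auto
next
  case (Suc L)
  then obtain d e G where N: "nested_nbhds Z K \<omega> P d e G L" by blast
  then have "continuous_pseudometric Z d" "0 < e/2" unfolding nested_nbhds_def by auto
  then obtain d0 e0 G0 where "continuous_pseudometric Z d0" "0 < e0"
    "\<And>a. a \<in> K \<Longrightarrow> P (G0 a) \<and> openin Z (G0 a) \<and> (\<exists>W\<in>\<omega>. G0 a \<subseteq> W) \<and>
       pball Z d0 a e0 \<subseteq> G0 a \<and> G0 a \<subseteq> pball Z d a (e/2)"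
    using exists_small_good_nbhds[OF cr K good \<omega>] by blast
  then show ?case using nested_nbhds_Suc[OF N] by blast
qed

lemma AE_for_extend_into_preimage:
  assumes AE: "AE_for (subtopology Y {y \<in> topspace Y. g y \<in> V}) X"
    and C: "closedin X C" and h: "continuous_map (subtopology X C) Y h"
    and hV: "\<And>x. x \<in> C \<Longrightarrow> g (h x) \<in> V"
  obtains k where "continuous_map X Y k" "\<And>x. x \<in> topspace X \<Longrightarrow> g (k x) \<in> V"
    "\<And>x. x \<in> C \<Longrightarrow> k x = h x"
proof -
  have "C \<subseteq> topspace X" using C closedin_subset by blast
  then have "h ` topspace (subtopology X C) \<subseteq> {y \<in> topspace Y. g y \<in> V}"
    using continuous_map_image_subset_topspace[OF h] hV by auto
  then have "continuous_map (subtopology X C) (subtopology Y {y \<in> topspace Y. g y \<in> V}) h"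
    using h by (simp add: continuous_map_in_subtopology image_subset_iff_funcset)
  then obtain k where k: "continuous_map X (subtopology Y {y \<in> topspace Y. g y \<in> V}) k"
    and "\<forall>x\<in>C. k x = h x"
    using AE C unfolding AE_for_def by blast
  moreover have "continuous_map X Y k" "\<And>x. x \<in> topspace X \<Longrightarrow> g (k x) \<in> V"
    using k by (auto simp: continuous_map_in_subtopology)
  ultimately show thesis using that by blast
qed

lemma pasting_closed_disjoint_family:
  assumes J: "finite J" and B: "closedin X B" and A: "\<And>j. j \<in> J \<Longrightarrow> closedin X (A j)"
    and disj: "\<And>i j. \<lbrakk>i \<in> J; j \<in> J; i \<noteq> j\<rbrakk> \<Longrightarrow> A i \<inter> A j = {}"
    and h: "continuous_map (subtopology X B) Y h"
    and k: "\<And>j. j \<in> J \<Longrightarrow> continuous_map (subtopology X (A j)) Y (k j)"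
    and agree: "\<And>j x. \<lbrakk>j \<in> J; x \<in> B \<inter> A j\<rbrakk> \<Longrightarrow> k j x = h x"
  obtains h' where "continuous_map (subtopology X (B \<union> (\<Union>j\<in>J. A j))) Y h'"
    "\<And>x. x \<in> B \<Longrightarrow> h' x = h x" "\<And>j x. \<lbrakk>j \<in> J; x \<in> A j\<rbrakk> \<Longrightarrow> h' x = k j x"
proof -
  define S where "S = B \<union> (\<Union>j\<in>J. A j)"
  define T where "T i = (case i of None \<Rightarrow> B | Some j \<Rightarrow> A j)" for i
  define F where "F i = (case i of None \<Rightarrow> h | Some j \<Rightarrow> k j)" for i
  let ?I = "insert None (Some ` J)"
  have same: "i = j" if "i \<in> J" "j \<in> J" "x \<in> A i" "x \<in> A j" for i j x
    using disj that by blast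
  have T_sub: "T i \<subseteq> S" "closedin X (T i)" if "i \<in> ?I" for i
    using that B A unfolding S_def T_def by auto
  have sub_T: "subtopology (subtopology X S) (T i) = subtopology X (T i)" if "i \<in> ?I" for i
    using T_sub[OF that] by (simp add: subtopology_subtopology Int_absorb1)
  obtain h' where h': "continuous_map (subtopology X S) Y h'"
    and h'_eq: "\<And>x i. \<lbrakk>i \<in> ?I; x \<in> topspace (subtopology X S) \<inter> T i\<rbrakk> \<Longrightarrow> h' x = F i x"
  proof (rule pasting_lemma_exists_closed[of ?I "subtopology X S" T Y F])
    show "finite ?I" using J by simp
    show "topspace (subtopology X S) \<subseteq> \<Union> (T ` ?I)"
      unfolding S_def T_def by auto
    show "closedin (subtopology X S) (T i)" if "i \<in> ?I" for i
      using T_sub[OF that] closedin_subset_topspace by blast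
    show "continuous_map (subtopology (subtopology X S) (T i)) Y (F i)" if "i \<in> ?I" for i
      using that h k unfolding sub_T[OF that] by (auto simp: T_def F_def)
    show "F i x = F j x"
      if "i \<in> ?I" "j \<in> ?I" "x \<in> topspace (subtopology X S) \<inter> T i \<inter> T j" for i j x
      using that agree by (auto simp: T_def F_def dest: same)
  qed blast
  show thesis
  proof (rule that)
    show "continuous_map (subtopology X (B \<union> (\<Union>j\<in>J. A j))) Y h'"
      using h' unfolding S_def .
    show "h' x = h x" if "x \<in> B" for x
      using h'_eq[of None x] that closedin_subset[OF B] unfolding S_def T_def F_def by auto
    show "h' x = k j x" if "j \<in> J" "x \<in> A j" for j x
      using h'_eq[of "Some j" x] that closedin_subset[OF A[OF that(1)]] unfolding S_def T_def F_def by auto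
  qed
qed

context
  fixes X :: "'a topology" and Y :: "'b topology" and g :: "'b \<Rightarrow> 'c"
    and I :: "'i set" and A :: "'i \<Rightarrow> 'a set" and V :: "'i \<Rightarrow> 'c set" and lev :: "'i \<Rightarrow> nat"
  assumes fin: "finite I" and A_closed: "\<And>i. i \<in> I \<Longrightarrow> closedin X (A i)"
    and AE: "\<And>i. i \<in> I \<Longrightarrow> AE_for (subtopology Y {y \<in> topspace Y. g y \<in> V i}) X"
    and mono: "\<And>i j. \<lbrakk>i \<in> I; j \<in> I; lev i < lev j; A i \<inter> A j \<noteq> {}\<rbrakk> \<Longrightarrow> V i \<subseteq> V j"
    and disj: "\<And>i j. \<lbrakk>i \<in> I; j \<in> I; lev i = lev j; i \<noteq> j\<rbrakk> \<Longrightarrow> A i \<inter> A j = {}"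
begin

lemma levelled_AE_extension_step:
  assumes h: "continuous_map (subtopology X (\<Union>i\<in>{i \<in> I. lev i < k}. A i)) Y h"
    and h_V: "\<And>x. x \<in> (\<Union>i\<in>{i \<in> I. lev i < k}. A i) \<Longrightarrow> \<exists>i\<in>I. lev i < k \<and> x \<in> A i \<and> g (h x) \<in> V i"
  shows "\<exists>h'. continuous_map (subtopology X (\<Union>i\<in>{i \<in> I. lev i < Suc k}. A i)) Y h' \<and>
    (\<forall>x\<in>(\<Union>i\<in>{i \<in> I. lev i < Suc k}. A i). \<exists>i\<in>I. lev i < Suc k \<and> x \<in> A i \<and> g (h' x) \<in> V i)"
proof -
  define B where "B = (\<Union>i\<in>{i \<in> I. lev i < k}. A i)"
  define J where "J = {j \<in> I. lev j = k}"
  have B_closed: "closedin X B"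
    unfolding B_def using fin A_closed by (intro closedin_Union) auto
  have B_Suc: "(\<Union>i\<in>{i \<in> I. lev i < Suc k}. A i) = B \<union> (\<Union>j\<in>J. A j)"
    unfolding B_def J_def by (auto simp: less_Suc_eq)
  have "\<exists>kj. continuous_map X Y kj \<and> (\<forall>x\<in>topspace X. g (kj x) \<in> V j) \<and> (\<forall>x\<in>B \<inter> A j. kj x = h x)"
    if j: "j \<in> J" for j
  proof -
    have jI: "j \<in> I" using j by (simp add: J_def)
    have "g (h x) \<in> V j" if x: "x \<in> B \<inter> A j" for x
    proof -
      obtain i where "i \<in> I" "lev i < k" "x \<in> A i" "g (h x) \<in> V i" using h_V x unfolding B_def by blast
      moreover have "V i \<subseteq> V j" using mono[of i j] calculation jI j x by (auto simp: J_def)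
      ultimately show ?thesis by blast
    qed
    moreover have "continuous_map (subtopology X (B \<inter> A j)) Y h"
      using h continuous_map_from_subtopology_mono unfolding B_def by blast
    ultimately show ?thesis
      using AE_for_extend_into_preimage[OF AE[OF jI] closedin_Int[OF B_closed A_closed[OF jI]]] by metis
  qed
  then obtain kk where kk: "\<And>j. j \<in> J \<Longrightarrow> continuous_map X Y (kk j) \<and>
      (\<forall>x\<in>topspace X. g (kk j x) \<in> V j) \<and> (\<forall>x\<in>B \<inter> A j. kk j x = h x)"
    by metis
  obtain h' where h': "continuous_map (subtopology X (B \<union> (\<Union>j\<in>J. A j))) Y h'"
    and h'_B: "\<And>x. x \<in> B \<Longrightarrow> h' x = h x" and h'_A: "\<And>j x. \<lbrakk>j \<in> J; x \<in> A j\<rbrakk> \<Longrightarrow> h' x = kk j x"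
  proof (rule pasting_closed_disjoint_family[of J X B A Y h kk])
    show "finite J" using fin by (simp add: J_def)
    show "closedin X B" by (fact B_closed)
    show "closedin X (A j)" if "j \<in> J" for j
      using A_closed that unfolding J_def by blast
    show "A i \<inter> A j = {}" if "i \<in> J" "j \<in> J" "i \<noteq> j" for i j
      using disj that unfolding J_def by blast
    show "continuous_map (subtopology X B) Y h"
      using h unfolding B_def .
    show "continuous_map (subtopology X (A j)) Y (kk j)" if "j \<in> J" for j
      using kk[OF that] continuous_map_from_subtopology by blast
    show "kk j x = h x" if "j \<in> J" "x \<in> B \<inter> A j" for j x
      using kk[OF that(1)] that(2) by blast
  qed (rule that)
  have "\<exists>i\<in>I. lev i < Suc k \<and> x \<in> A i \<and> g (h' x) \<in> V i" if x: "x \<in> B \<union> (\<Union>j\<in>J. A j)" for x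
  proof (cases "x \<in> B")
    case True
    then show ?thesis using h_V h'_B[OF True] less_SucI unfolding B_def by metis
  next
    case False
    then obtain j where j: "j \<in> J" "x \<in> A j" using x by blast
    have "x \<in> topspace X" using A_closed j closedin_subset unfolding J_def by blast
    then show ?thesis using j kk[OF j(1)] h'_A[OF j] unfolding J_def by auto
  qed
  then show ?thesis using h' unfolding B_Suc by blast
qed

lemma levelled_AE_extension:
  assumes cov: "topspace X \<subseteq> (\<Union>i\<in>I. A i)"
  obtains h where "continuous_map X Y h" "\<And>x. x \<in> topspace X \<Longrightarrow> \<exists>i\<in>I. x \<in> A i \<and> g (h x) \<in> V i"
proof -
  have extension_below: "\<exists>h. continuous_map (subtopology X (\<Union>i\<in>{i \<in> I. lev i < k}. A i)) Y h \<and>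
          (\<forall>x\<in>(\<Union>i\<in>{i \<in> I. lev i < k}. A i). \<exists>i\<in>I. lev i < k \<and> x \<in> A i \<and> g (h x) \<in> V i)" for k
  proof (induction k)
    case 0
    then show ?case by simp
  next
    case (Suc k)
    then obtain h where h: "continuous_map (subtopology X (\<Union>i\<in>{i \<in> I. lev i < k}. A i)) Y h"
      and h_V: "\<forall>x\<in>(\<Union>i\<in>{i \<in> I. lev i < k}. A i). \<exists>i\<in>I. lev i < k \<and> x \<in> A i \<and> g (h x) \<in> V i"
      by (elim exE conjE)
    show ?case by (rule levelled_AE_extension_step[OF h]) (use h_V in blast)
  qed
  obtain k where "lev ` I \<subseteq> {..<k}" using finite_nat_bounded fin by blast
  then have top: "topspace X \<subseteq> (\<Union>i\<in>{i \<in> I. lev i < k}. A i)" using cov by fastforce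
  obtain h where h: "continuous_map (subtopology X (\<Union>i\<in>{i \<in> I. lev i < k}. A i)) Y h"
    and h_V: "\<forall>x\<in>(\<Union>i\<in>{i \<in> I. lev i < k}. A i). \<exists>i\<in>I. lev i < k \<and> x \<in> A i \<and> g (h x) \<in> V i"
    using extension_below[of k] by (elim exE conjE)
  show thesis
  proof (rule that)
    show "continuous_map X Y h" using h top by (simp add: subtopology_superset)
    show "\<exists>i\<in>I. x \<in> A i \<and> g (h x) \<in> V i" if "x \<in> topspace X" for x
      using h_V top that by blast
  qed
qed

end

lemma exists_empty_band:
  fixes \<phi> :: "'v \<Rightarrow> real"
  assumes S: "finite S" and card: "card {v \<in> S. 0 < \<phi> v} \<le> Suc n"
    and v0: "v0 \<in> S" "\<phi> v0 = 1"
  obtains r where "r \<le> n"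
    "\<And>v. v \<in> S \<Longrightarrow> \<phi> v \<le> (real r + 1) / (real n + 2) \<or> (real r + 2) / (real n + 2) \<le> \<phi> v"
proof -
  define M where "M = {v \<in> S. 0 < \<phi> v} - {v0}"
  have "finite M" using S by (simp add: M_def)
  have "card M \<le> n" using card v0 S by (simp add: M_def card_Diff_singleton)
  define band where "band v = nat \<lfloor>\<phi> v * (real n + 2)\<rfloor> - 1" for v
  have "card (band ` M) \<le> n" using card_image_le[OF \<open>finite M\<close>, of band] \<open>card M \<le> n\<close> by linarith
  then have "\<not> {..n} \<subseteq> band ` M"
    using card_mono[OF finite_imageI[OF \<open>finite M\<close>], of "{..n}"] by fastforce
  then obtain r where r: "r \<le> n" "r \<notin> band ` M" by blast
  have "\<phi> v \<le> (real r + 1) / (real n + 2) \<or> (real r + 2) / (real n + 2) \<le> \<phi> v" if v: "v \<in> S" for v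
  proof (rule ccontr)
    assume "\<not> ?thesis"
    then have lo: "(real r + 1) / (real n + 2) < \<phi> v" and hi: "\<phi> v < (real r + 2) / (real n + 2)"
      by auto
    have "0 < (real r + 1) / (real n + 2)" "(real r + 2) / (real n + 2) \<le> 1"
      using r(1) by simp_all
    then have "0 < \<phi> v" "\<phi> v \<noteq> 1" using lo hi by linarith+
    then have "v \<in> M" using v v0(2) unfolding M_def by auto
    moreover have "\<lfloor>\<phi> v * (real n + 2)\<rfloor> = int r + 1"
      using lo hi by (simp add: floor_eq_iff divide_less_eq less_divide_eq)
    then have "band v = r" unfolding band_def by simp
    ultimately show False using r(2) by blast
  qed
  then show thesis using that r(1) by blast
qed

lemma compact_space_peak_functions:
  fixes X :: "'a topology"
  assumes cr: "completely_regular_space X" and X: "compact_space X"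
    and U: "\<And>i. i \<in> I \<Longrightarrow> openin X (U i)" and cov: "topspace X \<subseteq> (\<Union>i\<in>I. U i)"
  obtains \<Phi> where "\<And>i. i \<in> I \<Longrightarrow> continuous_map X euclideanreal (\<Phi> i)"
    "\<And>i x. \<lbrakk>i \<in> I; x \<in> topspace X; 0 < \<Phi> i x\<rbrakk> \<Longrightarrow> x \<in> U i"
    "\<And>x. x \<in> topspace X \<Longrightarrow> \<exists>i\<in>I. \<Phi> i x = 1"
proof -
  obtain C :: "'a set" and \<iota> \<phi> where C: "finite C" "\<And>c. c \<in> C \<Longrightarrow> \<iota> c \<in> I"
    "\<And>c. c \<in> C \<Longrightarrow> continuous_map X euclideanreal (\<phi> c)"
    "\<And>c x. \<lbrakk>c \<in> C; x \<in> topspace X - U (\<iota> c)\<rbrakk> \<Longrightarrow> \<phi> c x = 1"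
    "\<And>x. x \<in> topspace X \<Longrightarrow> \<exists>c\<in>C. \<phi> c x < 1/2"
    by (rule compactin_Urysohn_subcover[OF cr X[unfolded compact_space_def] U cov]) auto
  define \<Phi> where "\<Phi> i x = min 1 (2 * (\<Sum>c\<in>{c \<in> C. \<iota> c = i}. max 0 (1 - \<phi> c x)))" for i x
  show thesis
  proof (rule that)
    show "continuous_map X euclideanreal (\<Phi> i)" for i
      unfolding \<Phi>_def using C(1,3) by (intro continuous_intros) auto
    show "x \<in> U i" if "i \<in> I" "x \<in> topspace X" "0 < \<Phi> i x" for i x
    proof (rule ccontr)
      assume "x \<notin> U i"
      then have "(\<Sum>c\<in>{c \<in> C. \<iota> c = i}. max 0 (1 - \<phi> c x)) = 0"
        using C(4) that(2) by (intro sum.neutral) auto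
      then show False using that(3) by (simp add: \<Phi>_def)
    qed
    show "\<exists>i\<in>I. \<Phi> i x = 1" if x: "x \<in> topspace X" for x
    proof -
      obtain c where c: "c \<in> C" "\<phi> c x < 1/2" using C(5) x by blast
      have "max 0 (1 - \<phi> c x) \<le> (\<Sum>c'\<in>{c' \<in> C. \<iota> c' = \<iota> c}. max 0 (1 - \<phi> c' x))"
        using C(1) c(1) by (intro member_le_sum) auto
      then have "\<Phi> (\<iota> c) x = 1" using c(2) by (simp add: \<Phi>_def)
      then show ?thesis using C(2) c(1) by blast
    qed
  qed
qed

lemma closedin_Collect_all:
  assumes "\<And>i. i \<in> S \<Longrightarrow> closedin X {x \<in> topspace X. P i x}"
  shows "closedin X {x \<in> topspace X. \<forall>i\<in>S. P i x}"
proof (cases "S = {}")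
  case False
  then have "{x \<in> topspace X. \<forall>i\<in>S. P i x} = (\<Inter>i\<in>S. {x \<in> topspace X. P i x})"
    by auto
  then show ?thesis using False assms by auto
qed simp

definition stratum :: "'a topology \<Rightarrow> ('i \<Rightarrow> 'a \<Rightarrow> real) \<Rightarrow> 'i set \<Rightarrow> nat \<Rightarrow> nat \<Rightarrow> 'i set \<Rightarrow> 'a set"
  where "stratum X \<Phi> I n r \<sigma> = {x \<in> topspace X. \<forall>i\<in>I.
     if i \<in> \<sigma> then (real r + 2) / (real n + 2) \<le> \<Phi> i x else \<Phi> i x \<le> (real r + 1) / (real n + 2)}"

lemma closedin_stratum:
  assumes "\<And>i. i \<in> I \<Longrightarrow> continuous_map X euclideanreal (\<Phi> i)"
  shows "closedin X (stratum X \<Phi> I n r \<sigma>)"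
  unfolding stratum_def
proof (rule closedin_Collect_all)
  fix i assume i: "i \<in> I"
  show "closedin X {x \<in> topspace X. if i \<in> \<sigma> then (real r + 2) / (real n + 2) \<le> \<Phi> i x
      else \<Phi> i x \<le> (real r + 1) / (real n + 2)}"
    using closedin_continuous_map_preimage[OF assms[OF i], of "{(real r + 2) / (real n + 2)..}"]
      closedin_continuous_map_preimage[OF assms[OF i], of "{..(real r + 1) / (real n + 2)}"]
    by (cases "i \<in> \<sigma>") auto
qed

lemma stratum_disjoint:
  assumes "\<sigma> \<subseteq> I" "\<sigma>' \<subseteq> I" "\<sigma> \<noteq> \<sigma>'"
  shows "stratum X \<Phi> I n r \<sigma> \<inter> stratum X \<Phi> I n r \<sigma>' = {}"
proof -
  obtain i where i: "i \<in> I" "(i \<in> \<sigma>) \<noteq> (i \<in> \<sigma>')" using assms by blast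
  have gap: "(real r + 1) / (real n + 2) < (real r + 2) / (real n + 2)"
    by (simp add: divide_strict_right_mono)
  have False if "x \<in> stratum X \<Phi> I n r \<sigma>" "x \<in> stratum X \<Phi> I n r \<sigma>'" for x
  proof -
    have "if i \<in> \<sigma> then (real r + 2) / (real n + 2) \<le> \<Phi> i x else \<Phi> i x \<le> (real r + 1) / (real n + 2)"
      "if i \<in> \<sigma>' then (real r + 2) / (real n + 2) \<le> \<Phi> i x else \<Phi> i x \<le> (real r + 1) / (real n + 2)"
      using that i(1) unfolding stratum_def by auto
    then show False using i(2) gap by (auto split: if_splits)
  qed
  then show ?thesis by blast
qed

lemma stratum_positive:
  assumes "i \<in> \<sigma>" "\<sigma> \<subseteq> I" "x \<in> stratum X \<Phi> I n r \<sigma>"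
  shows "0 < \<Phi> i x"
proof -
  have "(real r + 2) / (real n + 2) \<le> \<Phi> i x" using assms unfolding stratum_def by auto
  moreover have "0 < (real r + 2) / (real n + 2)" by simp
  ultimately show ?thesis by linarith
qed

lemma in_some_stratum:
  assumes I: "finite I" and x: "x \<in> topspace X" and card: "card {i \<in> I. 0 < \<Phi> i x} \<le> Suc n"
    and i0: "i0 \<in> I" "\<Phi> i0 x = 1"
  obtains r \<sigma> where "r \<le> n" "\<sigma> \<subseteq> I" "\<sigma> \<noteq> {}" "x \<in> stratum X \<Phi> I n r \<sigma>"
proof -
  obtain r where r: "r \<le> n"
    "\<And>i. i \<in> I \<Longrightarrow> \<Phi> i x \<le> (real r + 1) / (real n + 2) \<or> (real r + 2) / (real n + 2) \<le> \<Phi> i x"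
    using exists_empty_band[of I "\<lambda>i. \<Phi> i x" n i0] I card i0 by blast
  define \<sigma> where "\<sigma> = {i \<in> I. (real r + 2) / (real n + 2) \<le> \<Phi> i x}"
  have "(real r + 2) / (real n + 2) \<le> 1" using r(1) by simp
  then have "i0 \<in> \<sigma>" using i0 unfolding \<sigma>_def by simp
  moreover have "x \<in> stratum X \<Phi> I n r \<sigma>" using x r(2) unfolding stratum_def \<sigma>_def by auto
  ultimately show thesis using that[of r \<sigma>] r(1) unfolding \<sigma>_def by blast
qed

lemma finite_order_cover_levelled_refinement:
  fixes X :: "'a topology" and U :: "'i \<Rightarrow> 'a set"
  assumes cr: "completely_regular_space X" and X: "compact_space X" and I: "finite I"
    and U: "\<And>i. i \<in> I \<Longrightarrow> openin X (U i)" and cov: "topspace X \<subseteq> (\<Union>i\<in>I. U i)"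
    and order: "\<And>x. x \<in> topspace X \<Longrightarrow> card {i \<in> I. x \<in> U i} \<le> Suc n"
  obtains J :: "(nat \<times> 'i set) set" and A lev \<rho> where "finite J"
    "\<And>j. j \<in> J \<Longrightarrow> closedin X (A j)" "topspace X \<subseteq> (\<Union>j\<in>J. A j)"
    "\<And>j. j \<in> J \<Longrightarrow> lev j \<le> n"
    "\<And>j j'. \<lbrakk>j \<in> J; j' \<in> J; lev j = lev j'; j \<noteq> j'\<rbrakk> \<Longrightarrow> A j \<inter> A j' = {}"
    "\<And>j. j \<in> J \<Longrightarrow> \<rho> j \<in> I \<and> A j \<subseteq> U (\<rho> j)"
proof -
  obtain \<Phi> where \<Phi>_cont: "\<And>i. i \<in> I \<Longrightarrow> continuous_map X euclideanreal (\<Phi> i)"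
    and \<Phi>_supp: "\<And>i x. \<lbrakk>i \<in> I; x \<in> topspace X; 0 < \<Phi> i x\<rbrakk> \<Longrightarrow> x \<in> U i"
    and \<Phi>_peak: "\<And>x. x \<in> topspace X \<Longrightarrow> \<exists>i\<in>I. \<Phi> i x = 1"
    using compact_space_peak_functions[OF cr X U cov] by blast
  define J where "J = {(r, \<sigma>). r \<le> n \<and> \<sigma> \<subseteq> I \<and> \<sigma> \<noteq> {}}"
  define A where "A = (\<lambda>(r, \<sigma>). stratum X \<Phi> I n r \<sigma>)"
  define \<rho> where "\<rho> = (\<lambda>(r :: nat, \<sigma> :: 'i set). SOME i. i \<in> \<sigma>)"
  show thesis
  proof (rule that[of J A fst \<rho>])
    have "J \<subseteq> {..n} \<times> Pow I" by (auto simp: J_def)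
    then show "finite J" using I by (simp add: finite_subset)
    have "closedin X (stratum X \<Phi> I n r \<sigma>)" for r \<sigma>
      by (rule closedin_stratum) (rule \<Phi>_cont)
    then show "closedin X (A j)" for j
      unfolding A_def by (simp split: prod.split)
    show "topspace X \<subseteq> (\<Union>j\<in>J. A j)"
    proof
      fix x assume x: "x \<in> topspace X"
      obtain i0 where i0: "i0 \<in> I" "\<Phi> i0 x = 1" using \<Phi>_peak[OF x] by blast
      have "card {i \<in> I. 0 < \<Phi> i x} \<le> card {i \<in> I. x \<in> U i}"
        using I \<Phi>_supp x by (intro card_mono) auto
      then have card: "card {i \<in> I. 0 < \<Phi> i x} \<le> Suc n" using order[OF x] by linarith
      obtain r \<sigma> where "r \<le> n" "\<sigma> \<subseteq> I" "\<sigma> \<noteq> {}" "x \<in> stratum X \<Phi> I n r \<sigma>"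
        using in_some_stratum[where \<Phi>=\<Phi>, OF I x card i0] by blast
      then show "x \<in> (\<Union>j\<in>J. A j)" unfolding J_def A_def by blast
    qed
    show "fst j \<le> n" if "j \<in> J" for j
      using that by (auto simp: J_def)
    show "A j \<inter> A j' = {}" if jj': "j \<in> J" "j' \<in> J" "fst j = fst j'" "j \<noteq> j'" for j j'
    proof -
      obtain r \<sigma> \<sigma>' where "j = (r, \<sigma>)" "j' = (r, \<sigma>')" "\<sigma> \<subseteq> I" "\<sigma>' \<subseteq> I" "\<sigma> \<noteq> \<sigma>'"
        using jj' unfolding J_def by (cases j, cases j') auto
      then show ?thesis unfolding A_def using stratum_disjoint by simp
    qed
    show "\<rho> j \<in> I \<and> A j \<subseteq> U (\<rho> j)" if jJ: "j \<in> J" for j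
    proof -
      obtain r \<sigma> where j: "j = (r, \<sigma>)" "\<sigma> \<subseteq> I" "\<sigma> \<noteq> {}" using jJ unfolding J_def by auto
      then have \<rho>: "\<rho> j \<in> \<sigma>" unfolding \<rho>_def by (simp add: some_in_eq)
      have "x \<in> U (\<rho> j)" if x: "x \<in> A j" for x
      proof (rule \<Phi>_supp)
        show "\<rho> j \<in> I" using \<rho> j(2) by blast
        show "x \<in> topspace X" using x unfolding A_def j(1) stratum_def by simp
        show "0 < \<Phi> (\<rho> j) x" using stratum_positive[OF \<rho> j(2)] x unfolding A_def j(1) by simp
      qed
      then show ?thesis using \<rho> j(2) by blast
    qed
  qed
qed

lemma covering_dim_le_refine_open_cover:
  assumes X: "compact_space X" and dim: "covering_dim_le X n"
    and \<U>: "\<And>U. U \<in> \<U> \<Longrightarrow> openin X U" "\<Union>\<U> = topspace X"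
  obtains \<V> where "finite \<V>" "\<And>V. V \<in> \<V> \<Longrightarrow> openin X V" "\<Union>\<V> = topspace X"
    "\<And>V. V \<in> \<V> \<Longrightarrow> \<exists>U\<in>\<U>. V \<subseteq> U" "\<And>x. x \<in> topspace X \<Longrightarrow> card {V \<in> \<V>. x \<in> V} \<le> Suc n"
proof -
  have "topspace X \<subseteq> \<Union>\<U>" using \<U>(2) by simp
  then obtain \<F> where \<F>: "finite \<F>" "\<F> \<subseteq> \<U>" "topspace X \<subseteq> \<Union>\<F>"
    using compactinD[OF X[unfolded compact_space_def] \<U>(1)] by meson
  then have "finite \<F> \<and> (\<forall>U\<in>\<F>. openin X U) \<and> \<Union>\<F> = topspace X"
    using \<U>(1) openin_subset by blast
  then have "\<exists>\<V>. finite \<V> \<and> (\<forall>V\<in>\<V>. openin X V) \<and> \<Union>\<V> = topspace X \<and>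
      (\<forall>V\<in>\<V>. \<exists>U\<in>\<F>. V \<subseteq> U) \<and> (\<forall>x\<in>topspace X. card {V \<in> \<V>. x \<in> V} \<le> Suc n)"
    using dim unfolding covering_dim_le_def by (elim allE[of _ \<F>] mp)
  then obtain \<V> where \<V>: "finite \<V>" "\<forall>V\<in>\<V>. openin X V" "\<Union>\<V> = topspace X"
    "\<forall>V\<in>\<V>. \<exists>U\<in>\<F>. V \<subseteq> U" "\<forall>x\<in>topspace X. card {V \<in> \<V>. x \<in> V} \<le> Suc n"
    by auto
  show thesis
  proof (rule that)
    show "\<exists>U\<in>\<U>. V \<subseteq> U" if "V \<in> \<V>" for V
      using \<V>(4) \<F>(2) that by blast
  qed (use \<V> in simp_all)
qed

lemma compactin_pseudoball_refinement:
  fixes Z :: "'c topology"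
  assumes K: "compactin Z K" and dim: "covering_dim_le (subtopology Z K) n"
    and d: "continuous_pseudometric Z d" and e: "0 < e"
  obtains \<V> cen where "finite \<V>" "\<And>V. V \<in> \<V> \<Longrightarrow> openin (subtopology Z K) V" "\<Union>\<V> = K"
    "\<And>V. V \<in> \<V> \<Longrightarrow> cen V \<in> K \<and> V \<subseteq> pball Z d (cen V) e"
    "\<And>z. z \<in> K \<Longrightarrow> card {V \<in> \<V>. z \<in> V} \<le> Suc n"
proof -
  have K_top: "topspace (subtopology Z K) = K" using K compactin_subset_topspace by auto
  have balls_open: "openin (subtopology Z K) U" if "U \<in> (\<lambda>c. pball Z d c e \<inter> K) ` K" for U
    using that openin_subtopology_Int openin_pball[OF d] by blast
  have balls_cover: "\<Union>((\<lambda>c. pball Z d c e \<inter> K) ` K) = topspace (subtopology Z K)"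
    using K_top K compactin_subset_topspace centre_in_pball[OF d _ e] by fastforce
  note refinement =
    covering_dim_le_refine_open_cover[OF compact_space_subtopology[OF K] dim balls_open balls_cover]
  obtain \<V> where \<V>: "finite \<V>" "\<And>V. V \<in> \<V> \<Longrightarrow> openin (subtopology Z K) V"
    "\<Union>\<V> = topspace (subtopology Z K)" "\<And>V. V \<in> \<V> \<Longrightarrow> \<exists>U\<in>(\<lambda>c. pball Z d c e \<inter> K) ` K. V \<subseteq> U"
    "\<And>z. z \<in> topspace (subtopology Z K) \<Longrightarrow> card {V \<in> \<V>. z \<in> V} \<le> Suc n"
    by (rule refinement) auto
  have "\<exists>c. c \<in> K \<and> V \<subseteq> pball Z d c e" if "V \<in> \<V>" for V
    using \<V>(4)[OF that] by auto
  then obtain cen where "\<And>V. V \<in> \<V> \<Longrightarrow> cen V \<in> K \<and> V \<subseteq> pball Z d (cen V) e"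
    by metis
  then show thesis using that[of \<V> cen] \<V> K_top by simp
qed

lemma levelled_pseudoball_refinement:
  fixes X :: "'a topology" and Z :: "'c topology"
  assumes crX: "completely_regular_space X" and X: "compact_space X"
    and f: "continuous_map X Z f" and dim: "covering_dim_le (subtopology Z (f ` topspace X)) n"
    and d: "continuous_pseudometric Z d" and e: "0 < e"
  obtains J :: "(nat \<times> 'c set set) set" and A lev c where "finite J"
    "\<And>j. j \<in> J \<Longrightarrow> closedin X (A j)" "topspace X \<subseteq> (\<Union>j\<in>J. A j)"
    "\<And>j. j \<in> J \<Longrightarrow> lev j \<le> n"
    "\<And>j j'. \<lbrakk>j \<in> J; j' \<in> J; lev j = lev j'; j \<noteq> j'\<rbrakk> \<Longrightarrow> A j \<inter> A j' = {}"
    "\<And>j. j \<in> J \<Longrightarrow> c j \<in> f ` topspace X"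
    "\<And>j x. \<lbrakk>j \<in> J; x \<in> A j\<rbrakk> \<Longrightarrow> d (c j) (f x) < e"
proof -
  have K: "compactin Z (f ` topspace X)" using image_compactin X f compact_space_def by blast
  obtain \<V> cen where \<V>: "finite \<V>" "\<And>V. V \<in> \<V> \<Longrightarrow> openin (subtopology Z (f ` topspace X)) V"
    "\<Union>\<V> = f ` topspace X" "\<And>V. V \<in> \<V> \<Longrightarrow> cen V \<in> f ` topspace X \<and> V \<subseteq> pball Z d (cen V) e"
    "\<And>z. z \<in> f ` topspace X \<Longrightarrow> card {V \<in> \<V>. z \<in> V} \<le> Suc n"
    by (rule compactin_pseudoball_refinement[OF K dim d e]) (rule that)
  have fK: "continuous_map X (subtopology Z (f ` topspace X)) f"
    using f by (simp add: continuous_map_in_subtopology)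
  define U where "U V = {x \<in> topspace X. f x \<in> V}" for V
  obtain J :: "(nat \<times> 'c set set) set" and A lev \<rho> where J: "finite J"
    "\<And>j. j \<in> J \<Longrightarrow> closedin X (A j)" "topspace X \<subseteq> (\<Union>j\<in>J. A j)"
    "\<And>j. j \<in> J \<Longrightarrow> lev j \<le> n"
    "\<And>j j'. \<lbrakk>j \<in> J; j' \<in> J; lev j = lev j'; j \<noteq> j'\<rbrakk> \<Longrightarrow> A j \<inter> A j' = {}"
    "\<And>j. j \<in> J \<Longrightarrow> \<rho> j \<in> \<V> \<and> A j \<subseteq> U (\<rho> j)"
  proof (rule finite_order_cover_levelled_refinement[OF crX X \<V>(1)])
    show "openin X (U V)" if "V \<in> \<V>" for V
      unfolding U_def using openin_continuous_map_preimage[OF fK \<V>(2)[OF that]] .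
    show "topspace X \<subseteq> (\<Union>V\<in>\<V>. U V)"
    proof
      fix x assume x: "x \<in> topspace X"
      then have "f x \<in> \<Union>\<V>" using \<V>(3) by simp
      then show "x \<in> (\<Union>V\<in>\<V>. U V)" using x unfolding U_def by blast
    qed
    show "card {V \<in> \<V>. x \<in> U V} \<le> Suc n" if x: "x \<in> topspace X" for x
    proof -
      have "{V \<in> \<V>. x \<in> U V} = {V \<in> \<V>. f x \<in> V}" using x unfolding U_def by auto
      then show ?thesis using \<V>(5) x by simp
    qed
  qed (rule that)
  show thesis
  proof (rule that[of J A lev "cen \<circ> \<rho>"])
    show "(cen \<circ> \<rho>) j \<in> f ` topspace X" if "j \<in> J" for j
      using \<V>(4) J(6)[OF that] by auto
    show "d ((cen \<circ> \<rho>) j) (f x) < e" if "j \<in> J" "x \<in> A j" for j x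
      using \<V>(4) J(6)[OF that(1)] that(2) unfolding U_def pball_def by auto
  qed (fact J)+
qed

lemma approximate_lift_through_AE_preimages:
  fixes X :: "'a topology" and Y :: "'b topology" and Z :: "'c topology"
  assumes crX: "completely_regular_space X" and X: "compact_space X"
    and crZ: "completely_regular_space Z"
    and f: "continuous_map X Z f" and dim: "covering_dim_le (subtopology Z (f ` topspace X)) n"
    and AE_nbhds: "\<And>z U. \<lbrakk>z \<in> f ` topspace X; openin Z U; z \<in> U\<rbrakk> \<Longrightarrow>
         \<exists>V. AE_for (subtopology Y {y \<in> topspace Y. g y \<in> V}) X \<and> openin Z V \<and> z \<in> V \<and> V \<subseteq> U"
    and \<omega>: "\<And>W. W \<in> \<omega> \<Longrightarrow> openin Z W" "f ` topspace X \<subseteq> \<Union>\<omega>"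
  obtains f' where "continuous_map X Y f'" "\<And>x. x \<in> topspace X \<Longrightarrow> \<exists>W\<in>\<omega>. f x \<in> W \<and> g (f' x) \<in> W"
proof -
  define P where "P V \<longleftrightarrow> AE_for (subtopology Y {y \<in> topspace Y. g y \<in> V}) X" for V
  have K: "compactin Z (f ` topspace X)" using image_compactin X f compact_space_def by blast
  obtain d e G where "nested_nbhds Z (f ` topspace X) \<omega> P d e G (Suc n)"
    using exists_nested_nbhds[OF crZ K AE_nbhds[folded P_def] \<omega>] by blast
  then have d: "continuous_pseudometric Z d" and e: "0 < e"
    and levels: "\<And>r a. \<lbrakk>r \<le> n; a \<in> f ` topspace X\<rbrakk> \<Longrightarrow>
       P (G r a) \<and> (\<exists>W\<in>\<omega>. G r a \<subseteq> W) \<and> pball Z d a e \<subseteq> G r a"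
    and nested: "\<And>r r' a a'. \<lbrakk>r' < r; r \<le> n; a \<in> f ` topspace X; a' \<in> f ` topspace X; d a a' < e\<rbrakk> \<Longrightarrow>
       G r' a' \<subseteq> G r a"
    unfolding nested_nbhds_def by (auto simp: less_Suc_eq_le)
  obtain J :: "(nat \<times> 'c set set) set" and A lev c where J: "finite J"
    "\<And>j. j \<in> J \<Longrightarrow> closedin X (A j)" "topspace X \<subseteq> (\<Union>j\<in>J. A j)"
    "\<And>j. j \<in> J \<Longrightarrow> lev j \<le> n"
    "\<And>j j'. \<lbrakk>j \<in> J; j' \<in> J; lev j = lev j'; j \<noteq> j'\<rbrakk> \<Longrightarrow> A j \<inter> A j' = {}"
    "\<And>j. j \<in> J \<Longrightarrow> c j \<in> f ` topspace X" "\<And>j x. \<lbrakk>j \<in> J; x \<in> A j\<rbrakk> \<Longrightarrow> d (c j) (f x) < e/2"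
  proof (rule levelled_pseudoball_refinement[OF crX X f dim d])
    show "0 < e/2" using e by simp
  qed (rule that)
  obtain h where h: "continuous_map X Y h"
    and h_G: "\<And>x. x \<in> topspace X \<Longrightarrow> \<exists>j\<in>J. x \<in> A j \<and> g (h x) \<in> G (lev j) (c j)"
  proof (rule levelled_AE_extension[where I=J and A=A and V="\<lambda>j. G (lev j) (c j)" and lev=lev])
    show "finite J" by (fact J(1))
    show "closedin X (A j)" if "j \<in> J" for j using J(2) that .
    show "topspace X \<subseteq> (\<Union>j\<in>J. A j)" by (fact J(3))
    show "AE_for (subtopology Y {y \<in> topspace Y. g y \<in> G (lev j) (c j)}) X" if "j \<in> J" for j
      using levels[OF J(4)[OF that] J(6)[OF that]] unfolding P_def by blast
    show "G (lev i) (c i) \<subseteq> G (lev j) (c j)"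
      if ij: "i \<in> J" "j \<in> J" "lev i < lev j" "A i \<inter> A j \<noteq> {}" for i j
    proof -
      obtain x where x: "x \<in> A i" "x \<in> A j" using ij(4) by blast
      have "d (c j) (f x) < e/2" using J(7)[OF ij(2) x(2)] .
      moreover have "d (c i) (f x) < e/2" using J(7)[OF ij(1) x(1)] .
      ultimately have "d (c j) (c i) < e"
        using continuous_pseudometric_triangle[OF d, where a="c j" and b="f x" and c="c i"]
          continuous_pseudometric_sym[OF d, of "f x" "c i"] by linarith
      then show ?thesis by (rule nested[OF ij(3) J(4)[OF ij(2)] J(6)[OF ij(2)] J(6)[OF ij(1)]])
    qed
    show "A i \<inter> A j = {}" if "i \<in> J" "j \<in> J" "lev i = lev j" "i \<noteq> j" for i j
      using J(5) that .
  qed (rule that)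
  show thesis
  proof (rule that[OF h])
    fix x assume x: "x \<in> topspace X"
    then obtain j where j: "j \<in> J" "x \<in> A j" "g (h x) \<in> G (lev j) (c j)" using h_G by blast
    have "f x \<in> topspace Z" using continuous_map_image_subset_topspace[OF f] x by blast
    then have "f x \<in> pball Z d (c j) e"
      using J(7)[OF j(1,2)] e unfolding pball_def by simp
    then show "\<exists>W\<in>\<omega>. f x \<in> W \<and> g (h x) \<in> W" using levels[OF J(4,6)[OF j(1)]] j(3) by blast
  qed
qed

theorem lemma3p3:
  fixes X :: "'a topology" and Y :: "'b topology" and Z :: "'c topology"
    and g :: "'b \<Rightarrow> 'c"
  assumes X_compactum: "compact_space X" "Hausdorff_space X"
    and tych: "tychonoff_space X" "tychonoff_space Y" "tychonoff_space Z"
    and Z_para: "paracompact_space Z"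
    and Z_dim: "\<And>K. compactin Z K \<Longrightarrow> finite_covering_dim (subtopology Z K)"
    and g_map: "continuous_map Y Z g"
    and g_surj: "g ` topspace Y = topspace Z"
    and g_AE: "\<And>z U. z \<in> topspace Z \<Longrightarrow> openin Z U \<Longrightarrow> z \<in> U \<Longrightarrow>
         \<exists>V. openin Z V \<and> z \<in> V \<and> V \<subseteq> U \<and>
             AE_for (subtopology Y {y \<in> topspace Y. g y \<in> V}) X"
  shows "\<forall>\<omega> f. (\<forall>W\<in>\<omega>. openin Z W) \<and> \<Union>\<omega> = topspace Z \<and> continuous_map X Z f \<longrightarrow>
           (\<exists>f'. continuous_map X Y f' \<and>
                 (\<forall>x\<in>topspace X. \<exists>W\<in>\<omega>. f x \<in> W \<and> g (f' x) \<in> W))"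
proof (intro allI impI, elim conjE)
  fix \<omega> and f :: "'a \<Rightarrow> 'c"
  assume \<omega>: "\<forall>W\<in>\<omega>. openin Z W" "\<Union>\<omega> = topspace Z" and f: "continuous_map X Z f"
  have f_top: "f ` topspace X \<subseteq> topspace Z"
    using f by (rule continuous_map_image_subset_topspace)
  have "compactin Z (f ` topspace X)"
    using image_compactin f X_compactum(1) compact_space_def by blast
  then obtain n where dim: "covering_dim_le (subtopology Z (f ` topspace X)) n"
    using Z_dim unfolding finite_covering_dim_def by blast
  have crX: "completely_regular_space X" and crZ: "completely_regular_space Z"
    using tych(1,3) unfolding tychonoff_space_def by blast+
  show "\<exists>f'. continuous_map X Y f' \<and> (\<forall>x\<in>topspace X. \<exists>W\<in>\<omega>. f x \<in> W \<and> g (f' x) \<in> W)"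
  proof (rule approximate_lift_through_AE_preimages[OF crX X_compactum(1) crZ f dim])
    show "\<exists>V. AE_for (subtopology Y {y \<in> topspace Y. g y \<in> V}) X \<and> openin Z V \<and> z \<in> V \<and> V \<subseteq> U"
      if "z \<in> f ` topspace X" "openin Z U" "z \<in> U" for z U
    proof -
      have "z \<in> topspace Z" using f_top that(1) by blast
      then show ?thesis using g_AE[OF _ that(2,3)] by blast
    qed
    show "openin Z W" if "W \<in> \<omega>" for W using \<omega>(1) that by blast
    show "f ` topspace X \<subseteq> \<Union>\<omega>" using f_top \<omega>(2) by simp
  qed blast
qed

end
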